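(* Let $\Omega_{Q_3}$ be the infinite cubic lattice graph, i.e. the graph with vertex set $\mathbb{Z}^3$ in which two vertices are adjacent iff they differ by $1$ in exactly one coordinate and agree in the others. Then $12 \leq \chi_{td}(\Omega_{Q_3}) \leq 13$.
   Context: For a (possibly infinite) simple graph $G$ and a positive integer $k$, a proper $k$-total difference labeling of $G$ is a function $f: V(G)\to\{1,\dots,k\}$, extended to edges by $f(\{u,v\}) = |f(u)-f(v)|$, such that: (i) adjacent vertices receive different labels; (ii) two distinct edges sharing a vertex receive different labels; (iii) no edge receives the same label as either of its endpoints. $\chi_{td}(G)$ denotes the smallest $k$ for which $G$ has a proper $k$-total difference labeling. *)

theory Defs
  imports Main
begin

text \<open>A simple graph is given by a symmetric irreflexive adjacency relation on a type of vertices.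
  Labels are integers in the range 1..k; the label of edge {u,v} is the absolute difference.\<close>

definition proper_total_diff_labeling :: "('a \<Rightarrow> 'a \<Rightarrow> bool) \<Rightarrow> nat \<Rightarrow> ('a \<Rightarrow> int) \<Rightarrow> bool" where
  "proper_total_diff_labeling adj k f \<longleftrightarrow>
     (\<forall>v. 1 \<le> f v \<and> f v \<le> int k) \<and>
     (\<forall>u v. adj u v \<longrightarrow> f u \<noteq> f v) \<and>
     (\<forall>u v w. adj u v \<and> adj u w \<and> v \<noteq> w \<longrightarrow> \<bar>f u - f v\<bar> \<noteq> \<bar>f u - f w\<bar>) \<and>
     (\<forall>u v. adj u v \<longrightarrow> \<bar>f u - f v\<bar> \<noteq> f u \<and> \<bar>f u - f v\<bar> \<noteq> f v)"

definition chi_td :: "('a \<Rightarrow> 'a \<Rightarrow> bool) \<Rightarrow> nat" where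
  "chi_td adj = (LEAST k. 0 < k \<and> (\<exists>f. proper_total_diff_labeling adj k f))"

definition cubic_lattice_adj :: "int \<times> int \<times> int \<Rightarrow> int \<times> int \<times> int \<Rightarrow> bool" where
  "cubic_lattice_adj p q \<longleftrightarrow>
     (case p of (a, b, c) \<Rightarrow> case q of (x, y, z) \<Rightarrow>
        (\<bar>a - x\<bar> = 1 \<and> b = y \<and> c = z) \<or>
        (a = x \<and> \<bar>b - y\<bar> = 1 \<and> c = z) \<or>
        (a = x \<and> b = y \<and> \<bar>c - z\<bar> = 1))"

end

theory Submission
  imports Defs
begin

text \<open>Lower bound: a vertex labelled c has six neighbours, whose edge labels are six distinct
  numbers \<bar>c - v\<bar> with v a label in use, v \<noteq> c, and neither of c, v twice the other. Starting from
  the labels 1..11, repeatedly discarding the labels that admit fewer than six such differences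
  discards all of them.

  Upper bound: the map (x, y, z) \<mapsto> (x + 2y + 3z) mod 7 sends the six neighbours of a vertex
  to the six residues other than its own, so it pulls back any proper total difference labeling
  of the complete graph K7, for instance the one with labels 1, 3, 4, 9, 10, 12, 13.\<close>

lemma proper_total_diff_labeling_range:
  "proper_total_diff_labeling adj k f \<Longrightarrow> range f \<subseteq> {1..int k}"
  by (auto simp: proper_total_diff_labeling_def)

lemma chi_td_le:
  assumes "proper_total_diff_labeling adj k f" and "0 < k"
  shows "chi_td adj \<le> k"
  unfolding chi_td_def using assms by (intro Least_le) blast

lemma le_chi_td:
  assumes "proper_total_diff_labeling adj k f" and "0 < k"
    and "\<And>k f. proper_total_diff_labeling adj k f \<Longrightarrow> m \<le> k"
  shows "m \<le> chi_td adj"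
  unfolding chi_td_def
proof (rule LeastI2_wellorder_ex)
  show "\<exists>k. 0 < k \<and> (\<exists>f. proper_total_diff_labeling adj k f)"
    using assms(1,2) by blast
qed (use assms(3) in blast)

definition admissible_diffs :: "int set \<Rightarrow> int \<Rightarrow> int set" where
  "admissible_diffs S c = (\<lambda>v. \<bar>c - v\<bar>) ` {v \<in> S. v \<noteq> c \<and> v \<noteq> 2 * c \<and> c \<noteq> 2 * v}"

lemma admissible_diffs_empty [simp]: "admissible_diffs {} c = {}"
  by (simp add: admissible_diffs_def)

lemma admissible_diffs_insert [simp]:
  "admissible_diffs (insert v S) c =
     (if v \<noteq> c \<and> v \<noteq> 2 * c \<and> c \<noteq> 2 * v then insert \<bar>c - v\<bar> (admissible_diffs S c)
      else admissible_diffs S c)"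
  by (auto simp: admissible_diffs_def)

lemma card_neighbours_le_card_admissible_diffs:
  assumes f: "proper_total_diff_labeling adj k f" and "range f \<subseteq> S" and "finite S"
    and N: "N \<subseteq> Collect (adj u)"
  shows "card N \<le> card (admissible_diffs S (f u))"
proof -
  let ?edge_label = "\<lambda>v. \<bar>f u - f v\<bar>"
  have "inj_on ?edge_label N"
    using f N unfolding inj_on_def proper_total_diff_labeling_def by blast
  then have "card N = card (?edge_label ` N)"
    by (simp add: card_image)
  also have "\<dots> \<le> card (admissible_diffs S (f u))"
  proof (rule card_mono)
    show "finite (admissible_diffs S (f u))"
      using \<open>finite S\<close> by (simp add: admissible_diffs_def)
    show "?edge_label ` N \<subseteq> admissible_diffs S (f u)"
    proof
      fix d assume "d \<in> ?edge_label ` N"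
      then obtain v where v: "adj u v" "d = \<bar>f u - f v\<bar>"
        using N by blast
      have "f v \<noteq> f u" "\<bar>f u - f v\<bar> \<noteq> f u" "\<bar>f u - f v\<bar> \<noteq> f v" "1 \<le> f u" "1 \<le> f v"
        using f \<open>adj u v\<close> unfolding proper_total_diff_labeling_def by metis+
      then have "f v \<noteq> 2 * f u" "f u \<noteq> 2 * f v"
        by auto
      then show "d \<in> admissible_diffs S (f u)"
        unfolding admissible_diffs_def using v \<open>f v \<noteq> f u\<close> \<open>range f \<subseteq> S\<close> by blast
    qed
  qed
  finally show ?thesis .
qed

definition lattice_neighbours :: "int \<times> int \<times> int \<Rightarrow> (int \<times> int \<times> int) set" where
  "lattice_neighbours =
     (\<lambda>(a, b, c). {(a + 1, b, c), (a - 1, b, c), (a, b + 1, c), (a, b - 1, c),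
                   (a, b, c + 1), (a, b, c - 1)})"

lemma cubic_lattice_adj_iff: "cubic_lattice_adj p q \<longleftrightarrow> q \<in> lattice_neighbours p"
  by (cases p; cases q) (auto simp: cubic_lattice_adj_def lattice_neighbours_def abs_eq_iff)

lemma card_lattice_neighbours: "card (lattice_neighbours p) = 6"
  by (cases p) (simp add: lattice_neighbours_def)

lemma lattice_labeling_discard_labels:
  assumes f: "proper_total_diff_labeling cubic_lattice_adj k f" and "range f \<subseteq> S" and "finite S"
    and "\<forall>c\<in>C. card (admissible_diffs S c) < 6"
  shows "range f \<subseteq> S - C"
proof
  fix l assume "l \<in> range f"
  then obtain p where "l = f p"
    by blast
  have "lattice_neighbours p \<subseteq> Collect (cubic_lattice_adj p)"
    by (auto simp: cubic_lattice_adj_iff)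
  from card_neighbours_le_card_admissible_diffs[OF f \<open>range f \<subseteq> S\<close> \<open>finite S\<close> this]
  have "6 \<le> card (admissible_diffs S l)"
    by (simp add: card_lattice_neighbours \<open>l = f p\<close>)
  then show "l \<in> S - C"
    using \<open>l \<in> range f\<close> \<open>range f \<subseteq> S\<close> assms(4) by force
qed

lemma no_lattice_labeling_below_12:
  assumes f: "proper_total_diff_labeling cubic_lattice_adj k f"
  shows "12 \<le> k"
proof (rule ccontr)
  assume "\<not> 12 \<le> k"
  then have "{1..int k} \<subseteq> {1..11}"
    by simp
  with proper_total_diff_labeling_range[OF f] have "range f \<subseteq> {1..11}"
    by (rule order_trans)
  also have "{1..11} = {1, 2, 3, 4, 5, 6, 7, 8, 9, 10, 11 :: int}"
    by (auto; presburger)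
  finally have "range f \<subseteq> {1, 2, 3, 4, 5, 6, 7, 8, 9, 10, 11}" .
  note discard = lattice_labeling_discard_labels[OF f this]
  have "range f \<subseteq> {1, 2, 3, 4, 7, 8, 9, 10, 11}"
    using discard[of "{5, 6}"] by (simp add: card_insert_if insert_Diff_if)
  note discard = lattice_labeling_discard_labels[OF f this]
  have "range f \<subseteq> {1, 2, 3, 7, 8, 9, 10, 11}"
    using discard[of "{4}"] by (simp add: card_insert_if insert_Diff_if)
  note discard = lattice_labeling_discard_labels[OF f this]
  have "range f \<subseteq> {1, 2, 3, 7, 8, 10, 11}"
    using discard[of "{9}"] by (simp add: card_insert_if insert_Diff_if)
  note discard = lattice_labeling_discard_labels[OF f this]
  have "range f \<subseteq> {3, 8, 10, 11}"
    using discard[of "{1, 2, 7}"] by (simp add: card_insert_if insert_Diff_if)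
  note discard = lattice_labeling_discard_labels[OF f this]
  have "range f \<subseteq> {}"
    using discard[of "{3, 8, 10, 11}"] by (simp add: card_insert_if insert_Diff_if)
  then show False
    by blast
qed

definition complete_adj :: "'a set \<Rightarrow> 'a \<Rightarrow> 'a \<Rightarrow> bool" where
  "complete_adj V u v \<longleftrightarrow> u \<in> V \<and> v \<in> V \<and> u \<noteq> v"

lemma proper_total_diff_labeling_comp:
  assumes g: "proper_total_diff_labeling adj' k g"
    and hom: "\<And>u v. adj u v \<Longrightarrow> adj' (h u) (h v)"
    and local_inj: "\<And>u v w. adj u v \<Longrightarrow> adj u w \<Longrightarrow> v \<noteq> w \<Longrightarrow> h v \<noteq> h w"
  shows "proper_total_diff_labeling adj k (g \<circ> h)"
  using g unfolding proper_total_diff_labeling_def comp_def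
  by (meson hom local_inj)

lemma proper_total_diff_labeling_complete_adj_iff:
  "proper_total_diff_labeling (complete_adj V) k f \<longleftrightarrow>
     (\<forall>v. 1 \<le> f v \<and> f v \<le> int k) \<and>
     (\<forall>u\<in>V. \<forall>v\<in>V. u \<noteq> v \<longrightarrow>
        f u \<noteq> f v \<and> \<bar>f u - f v\<bar> \<noteq> f u \<and> \<bar>f u - f v\<bar> \<noteq> f v \<and>
        (\<forall>w\<in>V. w \<noteq> u \<and> w \<noteq> v \<longrightarrow> \<bar>f u - f v\<bar> \<noteq> \<bar>f u - f w\<bar>))"
  unfolding proper_total_diff_labeling_def complete_adj_def
  by (intro arg_cong2[where f="(\<and>)"] refl) fastforce

definition residue_labels :: "int \<Rightarrow> int" where
  "residue_labels r = [1, 3, 4, 9, 10, 12, 13] ! nat (r mod 7)"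

lemma residue_labels_range: "residue_labels r \<in> {1..13}"
proof -
  have "residue_labels r \<in> set [1, 3, 4, 9, 10, 12, 13]"
    unfolding residue_labels_def by (rule nth_mem) (simp add: nat_less_iff)
  moreover have "set [1, 3, 4, 9, 10, 12, 13] \<subseteq> {1..13 :: int}"
    by auto
  ultimately show ?thesis
    by blast
qed

lemma proper_total_diff_labeling_residue_labels:
  "proper_total_diff_labeling (complete_adj {0..<7}) 13 residue_labels"
proof -
  have "{0..<7 :: int} = {0, 1, 2, 3, 4, 5, 6}"
    by auto
  moreover have "residue_labels 0 = 1" "residue_labels 1 = 3" "residue_labels 2 = 4"
    "residue_labels 3 = 9" "residue_labels 4 = 10" "residue_labels 5 = 12" "residue_labels 6 = 13"
    by (simp_all add: residue_labels_def)
  ultimately show ?thesis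
    using residue_labels_range unfolding proper_total_diff_labeling_complete_adj_iff by simp
qed

definition lattice_weight :: "int \<times> int \<times> int \<Rightarrow> int" where
  "lattice_weight = (\<lambda>(x, y, z). x + 2 * y + 3 * z)"

lemma lattice_weight_neighbour:
  "q \<in> lattice_neighbours p \<Longrightarrow> lattice_weight q - lattice_weight p \<in> {-3, -2, -1, 1, 2, 3}"
  by (cases p) (auto simp: lattice_neighbours_def lattice_weight_def)

lemma lattice_weight_inj_on_neighbours: "inj_on lattice_weight (lattice_neighbours p)"
  by (cases p) (auto simp: inj_on_def lattice_neighbours_def lattice_weight_def)

lemma mod_eq_imp_eq_int:
  fixes a b m :: int
  assumes "a mod m = b mod m" and "\<bar>a - b\<bar> < m"
  shows "a = b"
proof (rule ccontr)
  assume "a \<noteq> b"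
  moreover have "m dvd a - b"
    using assms(1) by (simp add: mod_eq_dvd_iff)
  ultimately have "\<bar>m\<bar> \<le> \<bar>a - b\<bar>"
    by (intro dvd_imp_le_int) auto
  with assms(2) show False
    by simp
qed

lemma proper_total_diff_labeling_cubic_lattice_13:
  "proper_total_diff_labeling cubic_lattice_adj 13 (residue_labels \<circ> (\<lambda>p. lattice_weight p mod 7))"
proof (rule proper_total_diff_labeling_comp[OF proper_total_diff_labeling_residue_labels])
  fix p q assume "cubic_lattice_adj p q"
  then have "lattice_weight q - lattice_weight p \<in> {-3, -2, -1, 1, 2, 3}"
    unfolding cubic_lattice_adj_iff by (rule lattice_weight_neighbour)
  then have "lattice_weight p \<noteq> lattice_weight q" "\<bar>lattice_weight p - lattice_weight q\<bar> < 7"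
    by auto
  then have "lattice_weight p mod 7 \<noteq> lattice_weight q mod 7"
    using mod_eq_imp_eq_int by blast
  then show "complete_adj {0..<7} (lattice_weight p mod 7) (lattice_weight q mod 7)"
    by (simp add: complete_adj_def)
next
  fix p q q' assume "cubic_lattice_adj p q" "cubic_lattice_adj p q'" "q \<noteq> q'"
  then have "q \<in> lattice_neighbours p" "q' \<in> lattice_neighbours p"
    by (simp_all add: cubic_lattice_adj_iff)
  then have "lattice_weight q \<noteq> lattice_weight q'"
    using \<open>q \<noteq> q'\<close> inj_onD[OF lattice_weight_inj_on_neighbours] by blast
  moreover have "\<bar>lattice_weight q - lattice_weight q'\<bar> < 7"
    using lattice_weight_neighbour[OF \<open>q \<in> lattice_neighbours p\<close>]
      lattice_weight_neighbour[OF \<open>q' \<in> lattice_neighbours p\<close>] by auto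
  ultimately show "lattice_weight q mod 7 \<noteq> lattice_weight q' mod 7"
    using mod_eq_imp_eq_int by blast
qed

theorem mainTheorem5:
  shows "12 \<le> chi_td cubic_lattice_adj \<and> chi_td cubic_lattice_adj \<le> 13"
proof
  show "12 \<le> chi_td cubic_lattice_adj"
    by (rule le_chi_td[OF proper_total_diff_labeling_cubic_lattice_13 _ no_lattice_labeling_below_12])
      simp
  show "chi_td cubic_lattice_adj \<le> 13"
    by (rule chi_td_le[OF proper_total_diff_labeling_cubic_lattice_13]) simp
qed

end
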